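(* Let $a\in\mathbb{R}^n$, $d\in\mathbb{R}^m$ with $\|a\|\ge\|d\|$. Let $(\bar x,\bar y)\in\mathbb{R}^{n+m}$ satisfy $\|\bar x\|>\|\bar y\|$ and $a^\mathsf{T}\bar x+d^\mathsf{T}\bar y\le0$, let $\lambda=\bar x/\|\bar x\|$, and let $\phi_\lambda(y)=\max_x\{\lambda^\mathsf{T} x:\|x\|\le\|y\|,\ a^\mathsf{T} x+d^\mathsf{T} y\le0\}$ for $y\in\mathbb{R}^m$. Let $L=\{(x,y):\lambda^\mathsf{T} x=0,\ y=0\}$, so that $L^\perp=\langle\lambda\rangle\times\mathbb{R}^m$ is identified with $\mathbb{R}\times\mathbb{R}^m$ via $(t\lambda,y)\leftrightarrow(t,y)$. Then the orthogonal projection of $(\bar x,\bar y)$ onto $L^\perp$, namely $(\lambda^\mathsf{T}\bar x,\bar y)$, lies in the interior of the epigraph $\{(t,y)\in\mathbb{R}\times\mathbb{R}^m:\phi_\lambda(y)\le t\}$.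
   Context: $\|\cdot\|$ is the Euclidean norm. *)

theory Defs
  imports "HOL-Analysis.Analysis"
begin

text \<open>Under the standing hypothesis norm a >= norm d the feasible set is nonempty and
  compact, so the supremum is attained and equals the maximum.\<close>
definition phi :: "real ^ 'n \<Rightarrow> real ^ 'm \<Rightarrow> real ^ 'n \<Rightarrow> real ^ 'm \<Rightarrow> real" where
  "phi a d lam y = Sup {lam \<bullet> x | x. norm x \<le> norm y \<and> a \<bullet> x + d \<bullet> y \<le> 0}"

end

theory Submission
  imports Defs
begin

text \<open>For a unit vector \<open>\<lambda>\<close>, Cauchy-Schwarz gives \<open>\<phi>\<^sub>\<lambda>(y) \<le> \<parallel>y\<parallel>\<close>, so the epigraph of
  \<open>\<phi>\<^sub>\<lambda>\<close> contains the open set \<open>{(t, y). \<parallel>y\<parallel> < t}\<close>. The projected point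
  \<open>(\<lambda>\<^sup>T x\<^sub>0, y\<^sub>0) = (\<parallel>x\<^sub>0\<parallel>, y\<^sub>0)\<close> lies in that set because \<open>\<parallel>x\<^sub>0\<parallel> > \<parallel>y\<^sub>0\<parallel>\<close>. The condition \<open>\<parallel>a\<parallel> \<ge> \<parallel>d\<parallel>\<close> only serves to make the
  feasible set nonempty, so that the supremum defining \<open>\<phi>\<^sub>\<lambda>\<close> is not the junk value \<open>Sup {}\<close>.\<close>

lemma exists_norm_le_inner_add_nonpos:
  fixes a :: "'a :: real_inner" and d y :: "'b :: real_inner"
  assumes "norm d \<le> norm a"
  shows "\<exists>x. norm x \<le> norm y \<and> a \<bullet> x + d \<bullet> y \<le> 0"
proof (cases "a = 0")
  case True
  then show ?thesis using assms by (intro exI[of _ 0]) simp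
next
  case False
  define x where "x = - (norm y / norm a) *\<^sub>R a"
  have "norm x = norm y"
    using False by (simp add: x_def)
  moreover have "a \<bullet> x = - norm a * norm y"
    using False by (simp add: x_def power2_norm_eq_inner[symmetric] power2_eq_square)
  moreover have "d \<bullet> y \<le> norm a * norm y"
  proof -
    have "d \<bullet> y \<le> norm d * norm y" by (rule norm_cauchy_schwarz)
    also have "\<dots> \<le> norm a * norm y" using assms by (simp add: mult_right_mono)
    finally show ?thesis .
  qed
  ultimately show ?thesis by (intro exI[of _ x]) simp
qed

lemma phi_le_norm:
  fixes a lam :: "real ^ 'n" and d y :: "real ^ 'm"
  assumes "norm d \<le> norm a" and "norm lam = 1"
  shows "phi a d lam y \<le> norm y"
  unfolding phi_def
proof (rule cSup_least)
  show "{lam \<bullet> x | x. norm x \<le> norm y \<and> a \<bullet> x + d \<bullet> y \<le> 0} \<noteq> {}"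
    using exists_norm_le_inner_add_nonpos[OF assms(1)] by blast
next
  fix s assume "s \<in> {lam \<bullet> x | x. norm x \<le> norm y \<and> a \<bullet> x + d \<bullet> y \<le> 0}"
  then obtain x where "s = lam \<bullet> x" "norm x \<le> norm y" by blast
  then show "s \<le> norm y"
    using norm_cauchy_schwarz[of lam x] assms(2) by simp
qed

lemma in_interior_epigraph_if_below_continuous:
  fixes f g :: "'a :: topological_space \<Rightarrow> real"
  assumes "continuous_on UNIV g" and "\<And>y. f y \<le> g y" and "g y < t"
  shows "(t, y) \<in> interior {p. f (snd p) \<le> fst p}"
proof (rule interiorI)
  show "open {p. g (snd p) < fst p}"
    by (intro open_Collect_less continuous_on_fst continuous_on_compose2[OF assms(1) continuous_on_snd]) auto
  show "{p. g (snd p) < fst p} \<subseteq> {p. f (snd p) \<le> fst p}"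
    using assms(2) by (auto intro: order_trans less_imp_le)
qed (use assms(3) in simp)

theorem lemma1:
  fixes a xbar :: "real ^ 'n" and d ybar :: "real ^ 'm"
  assumes "norm a \<ge> norm d"
    and "norm xbar > norm ybar"
    and "a \<bullet> xbar + d \<bullet> ybar \<le> 0"
  shows "(let lam = xbar /\<^sub>R norm xbar in
           (lam \<bullet> xbar, ybar) \<in> interior {p :: real \<times> (real ^ 'm). phi a d lam (snd p) \<le> fst p})"
proof -
  define lam where "lam = xbar /\<^sub>R norm xbar"
  have "xbar \<noteq> 0"
    using assms(2) by auto
  then have "norm lam = 1" and "lam \<bullet> xbar = norm xbar"
    by (simp_all add: lam_def power2_norm_eq_inner[symmetric] power2_eq_square)
  then have "(lam \<bullet> xbar, ybar) \<in> interior {p. phi a d lam (snd p) \<le> fst p}"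
    using assms(2) phi_le_norm[OF assms(1)]
    by (intro in_interior_epigraph_if_below_continuous[where g = norm] continuous_on_norm_id) simp_all
  then show ?thesis
    by (simp add: lam_def)
qed

end
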